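(* Let $I=[x_1,x_N]$ with partition $x_1<\dots<x_N$ and affine maps $u_i(x)=a_ix+b_i$ with $u_i(x_1)=x_i$, $u_i(x_N)=x_{i+1}$ ($i\in\mathbb{N}_{N-1}$). Let $f\in C(I)$ with $f\ge0$ on $I$, and let $\{q_n\}_{n\ge1}$ be a sequence in $(0,1]$ with $\lim q_n=1$. For $n\in\mathbb{N}$, $i\in\mathbb{N}_{N-1}$ set $\phi(f,i)=\min_{x\in I}f(u_i(x))$, $\Phi(f,i)=\max_{x\in I}f(u_i(x))$, $\phi_n=\min_{x\in I}M_{n,q_n}f(x)$, $\Phi_n=\max_{x\in I}M_{n,q_n}f(x)$, and let $C_n$ be a positive real number strictly larger than $\max\{\phi_n,\|f\|_\infty\}$. Suppose the continuous scaling functions $\alpha_i$ satisfy (1) $\|\alpha\|_\infty<1$ and (2) for all $n\in\mathbb{N}$, $i\in\mathbb{N}_{N-1}$, $x\in I$: \[ \max\left\{\frac{-\phi(f,i)}{C_n-\phi_n},\,-\frac{C_n-\Phi(f,i)}{\Phi_n}\right\}\le\alpha_i(x)\le\min\left\{\frac{\phi(f,i)}{\Phi_n},\,\frac{C_n-\Phi(f,i)}{C_n-\phi_n}\right\}. \] Then the quantum MKZ-fractal functions $f^{(q_n,\alpha)}_n$, $n\in\mathbb{N}$, are non-negative on $I$ and converge uniformly to $f$.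
   Context: For $q\in(0,1]$: $[k]_q=\frac{1-q^k}{1-q}$ ($q\ne1$), $[k]_1=k$, $q$-factorials and $\binom{n}{k}_q=\frac{[n]_q!}{[k]_q![n-k]_q!}$. Quantum MKZ operator: $M_{n,q}f(x)=P_{n,q}(x)\sum_{k\ge0}\binom{n+k}{k}_q\left(\frac{x-x_1}{x_N-x_1}\right)^k f\!\left(x_1+(x_N-x_1)\frac{[k]_q}{[k+n]_q}\right)$ for $x_1\le x<x_N$, $M_{n,q}f(x_N)=f(x_N)$, $P_{n,q}(x)=\prod_{j=0}^n(x_N-x_1-q^j(x-x_1))/(x_N-x_1)^{n+1}$. Scaling functions $\alpha_i\in C(I)$, $\|\alpha\|_\infty=\max_i\|\alpha_i\|_\infty$. The quantum MKZ-fractal function $f^{(q,\alpha)}_n$ is the unique $g\in C(I)$ with $g(u_i(x))=f(u_i(x))+\alpha_i(x)(g(x)-M_{n,q}f(x))$ for all $x\in I$, $i\in\mathbb{N}_{N-1}$. *)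

theory Defs
  imports "HOL-Analysis.Analysis"
begin

definition qint :: "real \<Rightarrow> nat \<Rightarrow> real" where
  "qint q k = (if q = 1 then real k else (1 - q ^ k) / (1 - q))"

definition qfact :: "real \<Rightarrow> nat \<Rightarrow> real" where
  "qfact q n = (\<Prod>k=1..n. qint q k)"

definition qbinom :: "real \<Rightarrow> nat \<Rightarrow> nat \<Rightarrow> real" where
  "qbinom q n k = qfact q n / (qfact q k * qfact q (n - k))"

definition mkz_P :: "real \<Rightarrow> real \<Rightarrow> nat \<Rightarrow> real \<Rightarrow> real \<Rightarrow> real" where
  "mkz_P x1 xN n q x =
     (\<Prod>j=0..n. (xN - x1 - q ^ j * (x - x1))) / (xN - x1) ^ (n + 1)"

definition mkz :: "real \<Rightarrow> real \<Rightarrow> nat \<Rightarrow> real \<Rightarrow> (real \<Rightarrow> real) \<Rightarrow> real \<Rightarrow> real" where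
  "mkz x1 xN n q f x =
     (if x = xN then f xN
      else mkz_P x1 xN n q x *
        (\<Sum>k. qbinom q (n + k) k * ((x - x1) / (xN - x1)) ^ k *
               f (x1 + (xN - x1) * qint q k / qint q (k + n))))"

definition mkz_fractal ::
  "(nat \<Rightarrow> real) \<Rightarrow> nat \<Rightarrow> (nat \<Rightarrow> real \<Rightarrow> real) \<Rightarrow> (nat \<Rightarrow> real \<Rightarrow> real)
   \<Rightarrow> nat \<Rightarrow> real \<Rightarrow> (real \<Rightarrow> real) \<Rightarrow> real \<Rightarrow> real" where
  "mkz_fractal xs N u \<alpha> n q f =
     (THE g. continuous_on {xs 1..xs N} g \<and> (\<forall>x. x \<notin> {xs 1..xs N} \<longrightarrow> g x = 0) \<and>
        (\<forall>x\<in>{xs 1..xs N}. \<forall>i\<in>{1..N-1}.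
           g (u i x) = f (u i x) + \<alpha> i x * (g x - mkz (xs 1) (xs N) n q f x)))"

definition sup_norm_on :: "real set \<Rightarrow> (real \<Rightarrow> real) \<Rightarrow> real" where
  "sup_norm_on I f = (SUP x\<in>I. \<bar>f x\<bar>)"

end

theory Submission
  imports Defs
begin

text \<open>Rescaled to \<open>[0, 1]\<close>, the operator is the positive functional
  \<open>F \<mapsto> \<Sum>\<^sub>k w\<^sub>k(t) F(\<xi>\<^sub>k)\<close> with nodes \<open>\<xi>\<^sub>k = [k]\<^sub>q / [k + n]\<^sub>q\<close>: its weights sum to \<open>1\<close>, its first
  moment is \<open>t\<close> and its second central moment is at most \<open>min (1 / [n]\<^sub>q) (1 - t)\<close>. Korovkin's
  argument therefore gives \<open>M\<^sub>n\<^sub>,\<^sub>q\<^sub>n f \<longrightarrow> f\<close> uniformly, since \<open>[n]\<^sub>q\<^sub>n \<longrightarrow> \<infinity>\<close> when \<open>q\<^sub>n \<longrightarrow> 1\<close>, and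
  also continuity at the right end point.

  The fractal function is the fixed point of the Read-Bajraktarevic operator, a contraction with
  constant \<open>s = \<parallel>\<alpha>\<parallel>\<^sub>\<infinity> < 1\<close>. At a point where \<open>\<bar>f\<^sup>\<alpha> - f\<bar>\<close> is maximal the self-referential
  equation gives \<open>\<parallel>f\<^sup>\<alpha> - f\<parallel> \<le> s / (1 - s) \<parallel>f - M f\<parallel>\<close>, whence uniform convergence. Condition (2)
  makes the operator map functions with values in \<open>[0, C\<^sub>n]\<close> to such functions, so its fixed
  point, the limit of the iterates starting at \<open>f\<close>, is non-negative.\<close>

lemma qint_eq_sum: "qint q k = (\<Sum>i<k. q ^ i)"
  by (simp add: qint_def sum_gp_strict)

lemma qint_0 [simp]: "qint q 0 = 0"
  by (simp add: qint_eq_sum)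

lemma qint_Suc: "qint q (Suc k) = qint q k + q ^ k"
  by (simp add: qint_eq_sum)

lemma qint_add: "qint q (m + k) = qint q m + q ^ m * qint q k"
  by (induction k) (simp_all add: qint_eq_sum algebra_simps power_add)

lemma qint_nonneg: "0 < q \<Longrightarrow> 0 \<le> qint q k"
  by (simp add: qint_eq_sum sum_nonneg)

lemma qint_mono: "0 < q \<Longrightarrow> m \<le> k \<Longrightarrow> qint q m \<le> qint q k"
  unfolding qint_eq_sum by (rule sum_mono2) auto

lemma qint_pos: "0 < q \<Longrightarrow> 1 \<le> k \<Longrightarrow> 0 < qint q k"
  using qint_mono[of q 1 k] by (simp add: qint_Suc)

lemma qfact_0 [simp]: "qfact q 0 = 1"
  by (simp add: qfact_def)

lemma qfact_Suc: "qfact q (Suc m) = qfact q m * qint q (Suc m)"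
  by (simp add: qfact_def)

lemma qfact_pos: "0 < q \<Longrightarrow> 0 < qfact q m"
  by (induction m) (simp_all add: qfact_Suc qint_pos)

lemma qbinom_diag: "0 < q \<Longrightarrow> qbinom q k k = 1"
  using qfact_pos[of q k] by (simp add: qbinom_def)

lemma qbinom_0_right: "0 < q \<Longrightarrow> qbinom q n 0 = 1"
  using qfact_pos[of q n] by (simp add: qbinom_def)

lemma qbinom_pos: "0 < q \<Longrightarrow> 0 < qbinom q (n + k) k"
  using qfact_pos[of q] by (simp add: qbinom_def)

text \<open>The q-Pascal rule, from \<open>[m + k + 2]\<^sub>q = [k + 1]\<^sub>q + q\<^sup>k\<^sup>+\<^sup>1 [m + 1]\<^sub>q\<close>.\<close>
lemma qbinom_pascal:
  assumes "0 < q"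
  shows "qbinom q (Suc m + Suc k) (Suc k) =
         qbinom q (Suc m + k) k + q ^ Suc k * qbinom q (m + Suc k) (Suc k)"
proof -
  have qint_split: "qint q (Suc (Suc (m + k))) = qint q (Suc k) + q ^ Suc k * qint q (Suc m)"
    using qint_add[of q "Suc k" "Suc m"] by (simp add: add.commute)
  have "qfact q k > 0" "qfact q m > 0" "qfact q (Suc (m + k)) > 0"
    "qint q (Suc k) > 0" "qint q (Suc m) > 0"
    using qfact_pos qint_pos assms by auto
  moreover have
    "qbinom q (Suc m + Suc k) (Suc k) = qfact q (Suc (m + k)) * qint q (Suc (Suc (m + k)))
       / (qfact q k * qint q (Suc k) * (qfact q m * qint q (Suc m)))"
    "qbinom q (Suc m + k) k = qfact q (Suc (m + k)) / (qfact q k * (qfact q m * qint q (Suc m)))"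
    "qbinom q (m + Suc k) (Suc k) = qfact q (Suc (m + k)) / (qfact q k * qint q (Suc k) * qfact q m)"
    by (simp_all add: qbinom_def qfact_Suc)
  ultimately show ?thesis
    by (simp only: qint_split) (simp add: field_simps)
qed

lemma qbinom_sum_diagonal:
  assumes "0 < q"
  shows "qbinom q (Suc m + k) k = (\<Sum>i\<le>k. q ^ i * qbinom q (m + i) i)"
proof (induction k)
  case 0
  then show ?case by (simp add: assms qbinom_0_right qbinom_diag)
next
  case (Suc k)
  then show ?case using qbinom_pascal[OF assms, of m k] by simp
qed

definition qpoch :: "nat \<Rightarrow> real \<Rightarrow> real \<Rightarrow> real" where
  "qpoch n q t = (\<Prod>j=0..n. 1 - q ^ j * t)"

lemma qpoch_Suc: "qpoch (Suc n) q t = (1 - t) * qpoch n q (q * t)"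
  unfolding qpoch_def by (subst prod.atLeast0_atMost_Suc_shift) (simp add: mult_ac)

lemma qpoch_pos:
  assumes "0 < q" "q \<le> 1" "0 \<le> t" "t < 1"
  shows "0 < qpoch n q t"
  unfolding qpoch_def
proof (rule prod_pos)
  fix j
  have "q ^ j * t \<le> t"
    using assms by (simp add: mult_left_le_one_le power_le_one)
  then show "0 < 1 - q ^ j * t" using assms by simp
qed

text \<open>Induction on \<open>n\<close>: the Cauchy product with the geometric series in \<open>t\<close> raises \<open>n\<close> by one.\<close>
lemma qbinom_series_sums:
  assumes q: "0 < q" "q \<le> 1" and t: "0 \<le> t" "t < 1"
  shows "(\<lambda>k. qbinom q (n + k) k * t ^ k) sums (1 / qpoch n q t)"
  using t
proof (induction n arbitrary: t)
  case 0
  then show ?case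
    using geometric_sums[of t] q by (simp add: qbinom_diag qpoch_def)
next
  case (Suc n)
  have qt: "0 \<le> q * t" "q * t < 1"
    using Suc.prems q mult_left_le_one_le[of t q] by auto
  have IH: "(\<lambda>k. qbinom q (n + k) k * (q * t) ^ k) sums (1 / qpoch n q (q * t))"
    using Suc.IH[OF qt] .
  have geom: "(\<lambda>k. t ^ k) sums (1 / (1 - t))"
    using geometric_sums[of t] Suc.prems by simp
  have "summable (\<lambda>k. norm (qbinom q (n + k) k * (q * t) ^ k))"
    using sums_summable[OF IH] qbinom_pos[OF q(1)] qt by (simp add: abs_mult abs_of_pos)
  moreover have "summable (\<lambda>k. norm (t ^ k))"
    using sums_summable[OF geom] Suc.prems by simp
  ultimately have "(\<lambda>k. \<Sum>i\<le>k. qbinom q (n + i) i * (q * t) ^ i * t ^ (k - i)) sums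
      ((\<Sum>k. qbinom q (n + k) k * (q * t) ^ k) * (\<Sum>k. t ^ k))"
    by (rule Cauchy_product_sums)
  also have "(\<Sum>k. qbinom q (n + k) k * (q * t) ^ k) * (\<Sum>k. t ^ k) = 1 / qpoch (Suc n) q t"
    by (simp add: sums_unique[OF IH, symmetric] sums_unique[OF geom, symmetric] qpoch_Suc)
  finally have product: "(\<lambda>k. \<Sum>i\<le>k. qbinom q (n + i) i * (q * t) ^ i * t ^ (k - i)) sums
      (1 / qpoch (Suc n) q t)" .
  have diagonal: "(\<Sum>i\<le>k. qbinom q (n + i) i * (q * t) ^ i * t ^ (k - i)) =
      qbinom q (Suc n + k) k * t ^ k" for k
  proof -
    have "(\<Sum>i\<le>k. qbinom q (n + i) i * (q * t) ^ i * t ^ (k - i)) =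
          (\<Sum>i\<le>k. q ^ i * qbinom q (n + i) i * t ^ k)"
      by (rule sum.cong) (auto simp: power_mult_distrib power_add[symmetric])
    then show ?thesis
      using qbinom_sum_diagonal[OF q(1), of n k] by (simp add: sum_distrib_right)
  qed
  show ?case
    using product by (simp add: diagonal)
qed

lemma qbinom_series_bounded_summable:
  assumes q: "0 < q" "q \<le> 1" and t: "0 \<le> t" "t < 1" and g: "\<And>k. \<bar>g k\<bar> \<le> B"
  shows "summable (\<lambda>k. qbinom q (n + k) k * t ^ k * g k)"
proof (rule summable_comparison_test'[OF summable_mult2[OF sums_summable[OF qbinom_series_sums[OF q t]]]])
  show "norm (qbinom q (n + k) k * t ^ k * g k) \<le> qbinom q (n + k) k * t ^ k * B" for k
    using g[of k] qbinom_pos[OF q(1), of n k] t by (simp add: abs_mult mult_left_mono)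
qed

definition mkz_node :: "real \<Rightarrow> nat \<Rightarrow> nat \<Rightarrow> real" where
  "mkz_node q n k = qint q k / qint q (k + n)"

definition mkz_weight :: "nat \<Rightarrow> real \<Rightarrow> real \<Rightarrow> nat \<Rightarrow> real" where
  "mkz_weight n q t k = qpoch n q t * qbinom q (n + k) k * t ^ k"

lemma mkz_node_0 [simp]: "mkz_node q n 0 = 0"
  by (simp add: mkz_node_def)

lemma mkz_node_bounds:
  assumes "0 < q" "1 \<le> n"
  shows "0 \<le> mkz_node q n k" "mkz_node q n k \<le> 1"
  using qint_pos[of q "k + n"] qint_mono[of q k "k + n"] qint_nonneg[of q k] assms
  by (simp_all add: mkz_node_def)

lemma mkz_node_Suc_le:
  assumes q: "0 < q" and n: "1 \<le> n"
  shows "mkz_node q n (Suc k) \<le> mkz_node q n k + 1 / qint q n"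
proof -
  have a: "0 \<le> qint q k" and c: "0 < qint q n" and p: "0 < q ^ k"
    using qint_nonneg qint_pos q n by auto
  have D: "qint q (k + n) = qint q k + q ^ k * qint q n"
    by (rule qint_add)
  have D_pos: "0 < qint q (k + n)"
    using a c p by (simp add: D add_nonneg_pos)
  have "mkz_node q n (Suc k) = (qint q k + q ^ k) / qint q (Suc k + n)"
    by (simp add: mkz_node_def qint_Suc)
  also have "\<dots> \<le> (qint q k + q ^ k) / qint q (k + n)"
    using qint_mono[OF q, of "k + n" "Suc k + n"] D_pos a p by (intro divide_left_mono) auto
  also have "\<dots> = mkz_node q n k + q ^ k / qint q (k + n)"
    by (simp add: mkz_node_def add_divide_distrib)
  also have "q ^ k / qint q (k + n) \<le> 1 / qint q n"
    using a c p D_pos by (simp add: D field_simps)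
  finally show ?thesis by simp
qed

lemma qbinom_mult_mkz_node:
  assumes "0 < q"
  shows "qbinom q (n + Suc k) (Suc k) * mkz_node q n (Suc k) = qbinom q (n + k) k"
proof -
  have "qfact q k > 0" "qfact q n > 0" "qfact q (n + k) > 0"
    "qint q (Suc k) > 0" "qint q (Suc (n + k)) > 0"
    using qfact_pos qint_pos assms by auto
  then show ?thesis
    by (simp add: mkz_node_def qbinom_def qfact_Suc field_simps)
qed

context
  fixes n :: nat and q t :: real
  assumes q: "0 < q" "q \<le> 1" and t: "0 \<le> t" "t < 1"
begin

lemma mkz_weight_nonneg: "0 \<le> mkz_weight n q t k"
  using qpoch_pos[OF q t, of n] qbinom_pos[OF q(1), of n k] t by (simp add: mkz_weight_def)

lemma mkz_weight_sums: "mkz_weight n q t sums 1"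
  using sums_mult[OF qbinom_series_sums[OF q t, of n], of "qpoch n q t"] qpoch_pos[OF q t, of n]
  unfolding mkz_weight_def[abs_def] by (simp add: mult.assoc)

lemma mkz_weight_Suc_mult_node:
  "mkz_weight n q t (Suc k) * mkz_node q n (Suc k) = t * mkz_weight n q t k"
  using qbinom_mult_mkz_node[OF q(1), of n k] by (simp add: mkz_weight_def mult_ac)

lemma mkz_first_moment_sums: "(\<lambda>k. mkz_weight n q t k * mkz_node q n k) sums t"
proof -
  have "(\<lambda>k. mkz_weight n q t (Suc k) * mkz_node q n (Suc k)) sums (t * 1)"
    unfolding mkz_weight_Suc_mult_node by (rule sums_mult[OF mkz_weight_sums])
  then show ?thesis
    by (subst (asm) sums_Suc_iff) simp
qed

context
  assumes n: "1 \<le> n"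
begin

text \<open>The second moment is bounded in two ways: by the first moment since the nodes lie in
  \<open>[0, 1]\<close>, and, shifting the index, by \<open>t\<^sup>2 + t / [n]\<^sub>q\<close> since consecutive nodes are at most
  \<open>1 / [n]\<^sub>q\<close> apart.\<close>
lemma mkz_second_moment_le:
  assumes S: "(\<lambda>k. mkz_weight n q t k * (mkz_node q n k)\<^sup>2) sums S"
  shows "S \<le> t" "S \<le> t\<^sup>2 + t / qint q n"
proof -
  let ?w = "mkz_weight n q t" and ?\<xi> = "mkz_node q n"
  have node: "0 \<le> ?\<xi> k" "?\<xi> k \<le> 1" for k
    using mkz_node_bounds[OF q(1) n] by auto
  show "S \<le> t"
  proof (rule sums_le[OF _ S mkz_first_moment_sums])
    show "?w k * (?\<xi> k)\<^sup>2 \<le> ?w k * ?\<xi> k" for k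
      using node[of k] mkz_weight_nonneg[of k]
      by (intro mult_left_mono) (auto simp: power2_eq_square mult_left_le_one_le)
  qed
  have shifted: "(\<lambda>k. ?w (Suc k) * (?\<xi> (Suc k))\<^sup>2) sums S"
    using S by (subst sums_Suc_iff) simp
  have bound: "(\<lambda>k. t * (?w k * ?\<xi> k) + t / qint q n * ?w k) sums (t * t + t / qint q n * 1)"
    by (intro sums_add sums_mult mkz_first_moment_sums mkz_weight_sums)
  have "S \<le> t * t + t / qint q n * 1"
  proof (rule sums_le[OF _ shifted bound])
    fix k
    have "?w (Suc k) * (?\<xi> (Suc k))\<^sup>2 = t * ?w k * ?\<xi> (Suc k)"
      using mkz_weight_Suc_mult_node[of k] by (simp add: power2_eq_square)
    also have "\<dots> \<le> t * ?w k * (?\<xi> k + 1 / qint q n)"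
      using mkz_node_Suc_le[OF q(1) n] mkz_weight_nonneg[of k] t by (intro mult_left_mono) auto
    finally show "?w (Suc k) * (?\<xi> (Suc k))\<^sup>2 \<le> t * (?w k * ?\<xi> k) + t / qint q n * ?w k"
      by (simp add: algebra_simps)
  qed
  then show "S \<le> t\<^sup>2 + t / qint q n"
    by (simp add: power2_eq_square)
qed

lemma mkz_central_moment:
  obtains m where "(\<lambda>k. mkz_weight n q t k * (mkz_node q n k - t)\<^sup>2) sums m"
    and "m \<le> min (1 / qint q n) (1 - t)"
proof -
  let ?w = "mkz_weight n q t" and ?\<xi> = "mkz_node q n"
  have "summable (\<lambda>k. qbinom q (n + k) k * t ^ k * (?\<xi> k)\<^sup>2)"
    using mkz_node_bounds[OF q(1) n] by (intro qbinom_series_bounded_summable[OF q t, of _ 1]) (simp add: power_le_one)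
  from summable_mult[OF this, of "qpoch n q t"] have "summable (\<lambda>k. ?w k * (?\<xi> k)\<^sup>2)"
    by (simp add: mkz_weight_def mult_ac)
  then obtain S where S: "(\<lambda>k. ?w k * (?\<xi> k)\<^sup>2) sums S"
    by (auto simp: summable_def)
  have "(\<lambda>k. ?w k * (?\<xi> k)\<^sup>2 - 2 * t * (?w k * ?\<xi> k) + t\<^sup>2 * ?w k) sums (S - 2 * t * t + t\<^sup>2 * 1)"
    by (intro sums_add sums_diff sums_mult S mkz_first_moment_sums mkz_weight_sums)
  then have central: "(\<lambda>k. ?w k * (?\<xi> k - t)\<^sup>2) sums (S - t\<^sup>2)"
    by (simp add: power2_eq_square algebra_simps)
  have "t / qint q n \<le> 1 / qint q n"
    using t qint_pos[OF q(1) n] by (simp add: divide_right_mono)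
  moreover have "t - t\<^sup>2 \<le> 1 - t"
    using zero_le_power2[of "1 - t"] by (simp add: power2_eq_square algebra_simps)
  ultimately have "S - t\<^sup>2 \<le> min (1 / qint q n) (1 - t)"
    using mkz_second_moment_le[OF S] by simp
  with central show ?thesis by (rule that)
qed

end

end

lemma mkz_unit_sums:
  assumes q: "0 < q" "q \<le> 1" and n: "1 \<le> n" and t: "0 \<le> t" "t < 1"
    and F: "\<And>s. s \<in> {0..1} \<Longrightarrow> \<bar>F s\<bar> \<le> B"
  shows "(\<lambda>k. mkz_weight n q t k * F (mkz_node q n k)) sums mkz 0 1 n q F t"
proof -
  have "summable (\<lambda>k. qbinom q (n + k) k * t ^ k * F (mkz_node q n k))"
    using mkz_node_bounds[OF q(1) n] F by (intro qbinom_series_bounded_summable[OF q t, of _ B]) simp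
  then have "(\<lambda>k. qpoch n q t * (qbinom q (n + k) k * t ^ k * F (mkz_node q n k))) sums
      (qpoch n q t * (\<Sum>k. qbinom q (n + k) k * t ^ k * F (mkz_node q n k)))"
    by (intro sums_mult summable_sums)
  moreover have "mkz_P 0 1 n q t = qpoch n q t"
    by (simp add: mkz_P_def qpoch_def)
  ultimately show ?thesis
    using t by (simp add: mkz_def mkz_weight_def mkz_node_def mult.assoc)
qed

lemma abs_diff_le_eps_plus_sq:
  fixes F :: "real \<Rightarrow> real"
  assumes B: "\<And>s. s \<in> S \<Longrightarrow> \<bar>F s\<bar> \<le> B" and \<delta>: "0 < \<delta>"
    and uc: "\<And>s r. s \<in> S \<Longrightarrow> r \<in> S \<Longrightarrow> \<bar>s - r\<bar> < \<delta> \<Longrightarrow> \<bar>F s - F r\<bar> \<le> \<epsilon>"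
    and s: "s \<in> S" and r: "r \<in> S"
  shows "\<bar>F s - F r\<bar> \<le> \<epsilon> + 2 * B / \<delta>\<^sup>2 * (s - r)\<^sup>2"
proof -
  have "0 \<le> \<epsilon>" using uc[OF r r] \<delta> by simp
  have "0 \<le> B" using B[OF r] by simp
  show ?thesis
  proof (cases "\<bar>s - r\<bar> < \<delta>")
    case True
    then show ?thesis
      using uc[OF s r] \<open>0 \<le> B\<close> by (simp add: add_increasing2)
  next
    case False
    then have "\<delta>\<^sup>2 \<le> (s - r)\<^sup>2"
      using \<delta> power_mono[of \<delta> "\<bar>s - r\<bar>" 2] by simp
    then have "2 * B \<le> 2 * B / \<delta>\<^sup>2 * (s - r)\<^sup>2"
      using \<delta> \<open>0 \<le> B\<close> by (simp add: field_simps mult_left_mono)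
    moreover have "\<bar>F s - F r\<bar> \<le> 2 * B"
      using B[OF s] B[OF r] by simp
    ultimately show ?thesis
      using \<open>0 \<le> \<epsilon>\<close> by simp
  qed
qed

text \<open>Korovkin's argument: the operator is positive and reproduces constants, so the error at \<open>t\<close>
  is controlled by the central moment \<open>\<Sum>\<^sub>k w\<^sub>k (\<xi>\<^sub>k - t)\<^sup>2\<close>.\<close>
lemma mkz_unit_approx:
  assumes q: "0 < q" "q \<le> 1" and n: "1 \<le> n" and t: "t \<in> {0..1}"
    and B: "\<And>s. s \<in> {0..1} \<Longrightarrow> \<bar>F s\<bar> \<le> B" and \<delta>: "0 < \<delta>"
    and uc: "\<And>s r. s \<in> {0..1} \<Longrightarrow> r \<in> {0..1} \<Longrightarrow> \<bar>s - r\<bar> < \<delta> \<Longrightarrow> \<bar>F s - F r\<bar> \<le> \<epsilon>"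
  shows "\<bar>mkz 0 1 n q F t - F t\<bar> \<le> \<epsilon> + 2 * B / \<delta>\<^sup>2 * min (1 / qint q n) (1 - t)"
proof (cases "t = 1")
  case True
  then show ?thesis
    using uc[OF t t] \<delta> qint_pos[OF q(1) n] by (simp add: mkz_def)
next
  case False
  define c where "c = 2 * B / \<delta>\<^sup>2"
  let ?w = "mkz_weight n q t" and ?\<xi> = "mkz_node q n"
  have t': "0 \<le> t" "t < 1" using t False by auto
  have c: "0 \<le> c" using B[OF t] by (simp add: c_def)
  obtain m where m: "(\<lambda>k. ?w k * (?\<xi> k - t)\<^sup>2) sums m" "m \<le> min (1 / qint q n) (1 - t)"
    using mkz_central_moment[OF q t' n] by blast
  have err: "(\<lambda>k. ?w k * F (?\<xi> k) - F t * ?w k) sums (mkz 0 1 n q F t - F t * 1)"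
    by (intro sums_diff sums_mult mkz_unit_sums[OF q n t' B] mkz_weight_sums[OF q t'])
  have bound: "(\<lambda>k. \<epsilon> * ?w k + c * (?w k * (?\<xi> k - t)\<^sup>2)) sums (\<epsilon> * 1 + c * m)"
    by (intro sums_add sums_mult m(1) mkz_weight_sums[OF q t'])
  have term_le: "norm (?w k * F (?\<xi> k) - F t * ?w k) \<le> \<epsilon> * ?w k + c * (?w k * (?\<xi> k - t)\<^sup>2)"
    for k
  proof -
    have "norm (?w k * F (?\<xi> k) - F t * ?w k) = \<bar>?w k * (F (?\<xi> k) - F t)\<bar>"
      by (simp add: algebra_simps)
    also have "\<dots> = ?w k * \<bar>F (?\<xi> k) - F t\<bar>"
      using mkz_weight_nonneg[OF q t', of n k] by (simp add: abs_mult)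
    also have "\<dots> \<le> ?w k * (\<epsilon> + c * (?\<xi> k - t)\<^sup>2)"
    proof (rule mult_left_mono[OF _ mkz_weight_nonneg[OF q t']])
      show "\<bar>F (?\<xi> k) - F t\<bar> \<le> \<epsilon> + c * (?\<xi> k - t)\<^sup>2"
        unfolding c_def
        by (rule abs_diff_le_eps_plus_sq[where S = "{0..1}", OF B \<delta> uc]) (use mkz_node_bounds[OF q(1) n, of k] t in auto)
    qed
    finally show ?thesis
      by (simp add: algebra_simps)
  qed
  have "\<bar>mkz 0 1 n q F t - F t\<bar> = norm (\<Sum>k. ?w k * F (?\<xi> k) - F t * ?w k)"
    using sums_unique[OF err] by simp
  also have "\<dots> \<le> (\<Sum>k. \<epsilon> * ?w k + c * (?w k * (?\<xi> k - t)\<^sup>2))"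
    by (rule norm_suminf_le[OF term_le sums_summable[OF bound]])
  also have "\<dots> = \<epsilon> + c * m"
    using sums_unique[OF bound] by simp
  also have "\<dots> \<le> \<epsilon> + c * min (1 / qint q n) (1 - t)"
    using m(2) c by (simp add: mult_left_mono)
  finally show ?thesis
    by (simp add: c_def)
qed

lemma mkz_unit_approx_uniform:
  assumes F: "continuous_on {0..1} F" and \<epsilon>: "0 < \<epsilon>"
  obtains c where "0 \<le> c" and "\<And>n q t. 0 < q \<Longrightarrow> q \<le> 1 \<Longrightarrow> 1 \<le> n \<Longrightarrow> t \<in> {0..1} \<Longrightarrow>
      \<bar>mkz 0 1 n q F t - F t\<bar> \<le> \<epsilon> + c * min (1 / qint q n) (1 - t)"
proof -
  obtain B where B: "0 \<le> B" "\<And>s. s \<in> {0..1} \<Longrightarrow> \<bar>F s\<bar> \<le> B"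
    using continuous_on_compact_bound[OF compact_Icc F] by auto
  obtain \<delta> where \<delta>: "0 < \<delta>"
    and uc: "\<And>s r. s \<in> {0..1} \<Longrightarrow> r \<in> {0..1} \<Longrightarrow> dist r s < \<delta> \<Longrightarrow> dist (F r) (F s) < \<epsilon>"
    using uniformly_continuous_onE[OF compact_uniformly_continuous[OF F compact_Icc] \<epsilon>] by metis
  have "\<bar>F s - F r\<bar> \<le> \<epsilon>" if "s \<in> {0..1}" "r \<in> {0..1}" "\<bar>s - r\<bar> < \<delta>" for s r
    using uc[OF that(2,1)] that(3) by (simp add: dist_real_def)
  then show ?thesis
    using B \<delta> by (intro that[of "2 * B / \<delta>\<^sup>2"] mkz_unit_approx) auto
qed

lemma mkz_unit_isCont:
  assumes q: "0 < q" "q \<le> 1" and n: "1 \<le> n" and t: "0 \<le> t" "t < 1"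
    and F: "\<And>s. s \<in> {0..1} \<Longrightarrow> \<bar>F s\<bar> \<le> B"
  shows "isCont (mkz 0 1 n q F) t"
proof -
  define c where "c k = qbinom q (n + k) k * F (mkz_node q n k)" for k
  have "summable (\<lambda>k. qbinom q (n + k) k * ((1 + t) / 2) ^ k * F (mkz_node q n k))"
    using mkz_node_bounds[OF q(1) n] F t by (intro qbinom_series_bounded_summable[OF q]) auto
  then have "isCont (\<lambda>s. \<Sum>k. c k * s ^ k) t"
    using t by (intro isCont_powser[of _ "(1 + t) / 2"]) (auto simp: c_def mult_ac)
  then have "isCont (\<lambda>s. qpoch n q s * (\<Sum>k. c k * s ^ k)) t"
    unfolding qpoch_def by (intro continuous_intros)
  moreover have "\<forall>\<^sub>F s in nhds t. s \<noteq> 1"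
    using t by (intro t1_space_nhds) simp
  then have "\<forall>\<^sub>F s in nhds t. mkz 0 1 n q F s = qpoch n q s * (\<Sum>k. c k * s ^ k)"
    by eventually_elim (simp add: mkz_def mkz_P_def qpoch_def c_def mkz_node_def mult_ac)
  ultimately show ?thesis
    by (simp add: isCont_cong)
qed

text \<open>The operator is defined separately at \<open>t = 1\<close>; continuity there comes from the
  approximation bound, which vanishes like \<open>1 - t\<close>.\<close>
lemma mkz_unit_continuous_at_1:
  assumes q: "0 < q" "q \<le> 1" and n: "1 \<le> n" and F: "continuous_on {0..1} F"
  shows "continuous (at 1 within {0..1}) (mkz 0 1 n q F)"
  unfolding continuous_within_eps_delta
proof (intro allI impI)
  fix e :: real assume e: "0 < e"
  then have "0 < e / 4" by simp
  then obtain c where c: "0 \<le> c" and approx: "\<And>n q s. 0 < q \<Longrightarrow> q \<le> 1 \<Longrightarrow> 1 \<le> n \<Longrightarrow>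
      s \<in> {0..1} \<Longrightarrow> \<bar>mkz 0 1 n q F s - F s\<bar> \<le> e / 4 + c * min (1 / qint q n) (1 - s)"
    using mkz_unit_approx_uniform[OF F] by blast
  have "continuous (at 1 within {0..1}) F"
    using F by (simp add: continuous_on_eq_continuous_within)
  then obtain d where d: "0 < d"
    and F_near: "\<And>s. s \<in> {0..1} \<Longrightarrow> dist s 1 < d \<Longrightarrow> dist (F s) (F 1) < e / 2"
    using e unfolding continuous_within_eps_delta by (meson half_gt_zero)
  show "\<exists>d>0. \<forall>s\<in>{0..1}. dist s 1 < d \<longrightarrow> dist (mkz 0 1 n q F s) (mkz 0 1 n q F 1) < e"
  proof (intro exI[of _ "min d (e / (4 * (c + 1)))"] conjI ballI impI)
    show "0 < min d (e / (4 * (c + 1)))"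
      using d e c by simp
    fix s :: real assume s: "s \<in> {0..1}" and near: "dist s 1 < min d (e / (4 * (c + 1)))"
    have "c * min (1 / qint q n) (1 - s) \<le> c * (e / (4 * (c + 1)))"
      using near s c by (intro mult_left_mono) (auto simp: dist_real_def)
    also have "\<dots> < e / 4"
      using c e by (simp add: field_simps)
    finally have "\<bar>mkz 0 1 n q F s - F s\<bar> < e / 2"
      using approx[OF q n s] by simp
    moreover have "\<bar>F s - F 1\<bar> < e / 2"
      using F_near[OF s] near by (simp add: dist_real_def)
    moreover have "mkz 0 1 n q F 1 = F 1"
      by (simp add: mkz_def)
    ultimately show "dist (mkz 0 1 n q F s) (mkz 0 1 n q F 1) < e"
      using abs_triangle_ineq[of "mkz 0 1 n q F s - F s" "F s - F 1"] by (simp add: dist_real_def)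
  qed
qed

lemma mkz_unit_continuous_on:
  assumes q: "0 < q" "q \<le> 1" and n: "1 \<le> n" and F: "continuous_on {0..1} F"
  shows "continuous_on {0..1} (mkz 0 1 n q F)"
  unfolding continuous_on_eq_continuous_within
proof
  fix t :: real assume t: "t \<in> {0..1}"
  show "continuous (at t within {0..1}) (mkz 0 1 n q F)"
  proof (cases "t = 1")
    case False
    obtain B where B: "\<And>s. s \<in> {0..1} \<Longrightarrow> norm (F s) \<le> B"
      using continuous_on_compact_bound[OF compact_Icc F] by metis
    have "isCont (mkz 0 1 n q F) t"
      by (rule mkz_unit_isCont[OF q n, of t F B]) (use t False B in auto)
    then show ?thesis
      by (rule continuous_at_imp_continuous_within)
  qed (simp add: mkz_unit_continuous_at_1[OF q n F])
qed

lemma mkz_P_rescale: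
  assumes "x1 < xN"
  shows "mkz_P x1 xN n q x = mkz_P 0 1 n q ((x - x1) / (xN - x1))"
proof -
  have "(\<Prod>j=0..n. xN - x1 - q ^ j * (x - x1)) =
        (\<Prod>j=0..n. (xN - x1) * (1 - q ^ j * ((x - x1) / (xN - x1))))"
    using assms by (intro prod.cong) (auto simp: field_simps)
  then show ?thesis
    using assms by (simp add: mkz_P_def prod.distrib)
qed

lemma mkz_rescale:
  assumes "x1 < xN"
  shows "mkz x1 xN n q f x = mkz 0 1 n q (\<lambda>s. f (x1 + (xN - x1) * s)) ((x - x1) / (xN - x1))"
proof (cases "x = xN")
  case True
  then show ?thesis
    using assms by (simp add: mkz_def)
next
  case False
  then have "(x - x1) / (xN - x1) \<noteq> 1"
    using assms by (simp add: divide_eq_1_iff)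
  with False show ?thesis
    unfolding mkz_def mkz_P_rescale[OF assms] by (simp add: times_divide_eq_right)
qed

lemma Icc_rescale:
  fixes x1 xN :: real
  assumes "x1 < xN"
  shows "x \<in> {x1..xN} \<longleftrightarrow> (x - x1) / (xN - x1) \<in> {0..1}"
    and "s \<in> {0..1} \<Longrightarrow> x1 + (xN - x1) * s \<in> {x1..xN}"
proof -
  show "x \<in> {x1..xN} \<longleftrightarrow> (x - x1) / (xN - x1) \<in> {0..1}"
    using assms by (auto simp: field_simps)
  show "x1 + (xN - x1) * s \<in> {x1..xN}" if "s \<in> {0..1}"
  proof -
    have "(xN - x1) * s \<le> (xN - x1) * 1" "0 \<le> (xN - x1) * s"
      using assms that by (intro mult_left_mono mult_nonneg_nonneg; simp)+
    then show ?thesis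
      by simp
  qed
qed

lemma continuous_on_rescale:
  fixes x1 xN :: real
  assumes "x1 < xN" and "continuous_on {x1..xN} f"
  shows "continuous_on {0..1} (\<lambda>s. f (x1 + (xN - x1) * s))"
  by (rule continuous_on_compose2[OF assms(2)])
    (use Icc_rescale(2)[OF assms(1)] in \<open>auto intro!: continuous_intros\<close>)

lemma mkz_continuous_on:
  assumes "x1 < xN" and f: "continuous_on {x1..xN} f"
    and q: "0 < q" "q \<le> 1" and n: "1 \<le> n"
  shows "continuous_on {x1..xN} (mkz x1 xN n q f)"
  unfolding mkz_rescale[OF assms(1)]
  using assms(1)
  by (intro continuous_on_compose2[OF mkz_unit_continuous_on[OF q n continuous_on_rescale[OF assms(1) f]]])
    (auto intro!: continuous_intros simp: Icc_rescale(1)[OF assms(1)])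

lemma mkz_left_end:
  assumes "x1 < xN" and "0 < q"
  shows "mkz x1 xN n q f x1 = f x1"
  using assms powser_zero[of "\<lambda>k. qbinom q (n + k) k * f (x1 + (xN - x1) * qint q k / qint q (k + n))"]
  by (simp add: mkz_def mkz_P_def qbinom_0_right mult_ac)

lemma mkz_right_end: "mkz x1 xN n q f xN = f xN"
  by (simp add: mkz_def)

lemma mkz_nonneg:
  assumes "x1 < xN" and f: "continuous_on {x1..xN} f" and f_nonneg: "\<And>x. x \<in> {x1..xN} \<Longrightarrow> 0 \<le> f x"
    and q: "0 < q" "q \<le> 1" and n: "1 \<le> n" and x: "x \<in> {x1..xN}"
  shows "0 \<le> mkz x1 xN n q f x"
proof (cases "x = xN")
  case True
  then show ?thesis using f_nonneg x by (simp add: mkz_right_end)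
next
  case False
  define F where "F = (\<lambda>s. f (x1 + (xN - x1) * s))"
  define t where "t = (x - x1) / (xN - x1)"
  have t: "0 \<le> t" "t < 1"
    using x False assms(1) by (auto simp: t_def field_simps)
  obtain B where B: "\<And>s. s \<in> {0..1} \<Longrightarrow> norm (F s) \<le> B"
    using continuous_on_compact_bound[OF compact_Icc continuous_on_rescale[OF assms(1) f]]
    unfolding F_def by metis
  have "0 \<le> mkz_weight n q t k * F (mkz_node q n k)" for k
    using mkz_weight_nonneg[OF q t] mkz_node_bounds[OF q(1) n, of k] f_nonneg
      Icc_rescale(2)[OF assms(1)] by (simp add: F_def)
  then have "0 \<le> mkz 0 1 n q F t"
    using B by (intro sums_le[OF _ sums_zero mkz_unit_sums[OF q n t]]) auto
  then show ?thesis
    by (simp add: mkz_rescale[OF assms(1)] F_def t_def)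
qed

lemma filterlim_qint_at_top:
  assumes q_pos: "\<forall>\<^sub>F n in sequentially. 0 < q n" and q_lim: "q \<longlonglongrightarrow> 1"
  shows "filterlim (\<lambda>n. qint (q n) n) at_top sequentially"
  unfolding filterlim_at_top
proof
  fix Z :: real
  obtain m :: nat where m: "Z < real m"
    using reals_Archimedean2 by blast
  have "(\<lambda>n. qint (q n) m) \<longlonglongrightarrow> qint 1 m"
    unfolding qint_eq_sum by (intro tendsto_intros q_lim)
  then have "\<forall>\<^sub>F n in sequentially. Z < qint (q n) m"
    using m by (intro order_tendstoD) (simp_all add: qint_eq_sum)
  with q_pos eventually_ge_at_top[of m]
  show "\<forall>\<^sub>F n in sequentially. Z \<le> qint (q n) n"
    by eventually_elim (use qint_mono in force)
qed

lemma mkz_approx_uniform: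
  assumes "x1 < xN" and f: "continuous_on {x1..xN} f" and e: "0 < e"
  obtains c where "\<And>n q x. 0 < q \<Longrightarrow> q \<le> 1 \<Longrightarrow> 1 \<le> n \<Longrightarrow> x \<in> {x1..xN} \<Longrightarrow>
      \<bar>mkz x1 xN n q f x - f x\<bar> \<le> e + c / qint q n"
proof -
  define F where "F s = f (x1 + (xN - x1) * s)" for s
  obtain c where c: "0 \<le> c" and approx: "\<And>n q t. 0 < q \<Longrightarrow> q \<le> 1 \<Longrightarrow> 1 \<le> n \<Longrightarrow>
      t \<in> {0..1} \<Longrightarrow> \<bar>mkz 0 1 n q F t - F t\<bar> \<le> e + c * min (1 / qint q n) (1 - t)"
    using mkz_unit_approx_uniform[OF continuous_on_rescale[OF assms(1) f] e] unfolding F_def by blast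
  show ?thesis
  proof (rule that[of c])
    fix n :: nat and q x :: real
    assume q: "0 < q" "q \<le> 1" and n: "1 \<le> n" and x: "x \<in> {x1..xN}"
    define t where "t = (x - x1) / (xN - x1)"
    have t: "t \<in> {0..1}"
      using x Icc_rescale(1)[OF assms(1)] by (simp add: t_def)
    have "c * min (1 / qint q n) (1 - t) \<le> c * (1 / qint q n)"
      using c by (intro mult_left_mono) auto
    moreover have "F t = f x"
      using assms(1) by (simp add: F_def t_def)
    ultimately show "\<bar>mkz x1 xN n q f x - f x\<bar> \<le> e + c / qint q n"
      using approx[OF q n t] by (simp add: mkz_rescale[OF assms(1)] F_def[abs_def] t_def)
  qed
qed

lemma mkz_uniform_limit:
  assumes "x1 < xN" and f: "continuous_on {x1..xN} f"
    and q_range: "\<And>n. 1 \<le> n \<Longrightarrow> 0 < q n \<and> q n \<le> 1" and q_lim: "q \<longlonglongrightarrow> 1"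
  shows "uniform_limit {x1..xN} (\<lambda>n. mkz x1 xN n (q n) f) f sequentially"
  unfolding uniform_limit_iff
proof (intro allI impI)
  fix e :: real assume e: "0 < e"
  then obtain c where approx: "\<And>n q x. 0 < q \<Longrightarrow> q \<le> 1 \<Longrightarrow> 1 \<le> n \<Longrightarrow> x \<in> {x1..xN} \<Longrightarrow>
      \<bar>mkz x1 xN n q f x - f x\<bar> \<le> e / 2 + c / qint q n"
    using mkz_approx_uniform[OF assms(1) f, of "e / 2"] by auto
  have "\<forall>\<^sub>F n in sequentially. 0 < q n"
    using q_range by (intro eventually_sequentiallyI[of 1]) simp
  then have "\<forall>\<^sub>F n in sequentially. 2 * c / e < qint (q n) n"
    using filterlim_qint_at_top[OF _ q_lim] by (simp add: filterlim_at_top_dense)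
  with eventually_ge_at_top[of 1]
  show "\<forall>\<^sub>F n in sequentially. \<forall>x\<in>{x1..xN}. dist (mkz x1 xN n (q n) f x) (f x) < e"
  proof eventually_elim
    case (elim n)
    then have q: "0 < q n" "q n \<le> 1" and n: "1 \<le> n"
      using q_range by auto
    have "c / qint (q n) n < e / 2"
      using elim e qint_pos[OF q(1) n] by (simp add: field_simps)
    show ?case
    proof
      fix x assume "x \<in> {x1..xN}"
      from approx[OF q n this] \<open>c / qint (q n) n < e / 2\<close>
      show "dist (mkz x1 xN n (q n) f x) (f x) < e"
        unfolding dist_real_def by linarith
    qed
  qed
qed

locale ifs_partition =
  fixes xs :: "nat \<Rightarrow> real" and N :: nat and u :: "nat \<Rightarrow> real \<Rightarrow> real"
  assumes N_ge_2: "2 \<le> N"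
    and xs_Suc_greater: "\<And>i. 1 \<le> i \<Longrightarrow> i < N \<Longrightarrow> xs i < xs (i + 1)"
    and u_affine: "\<And>i. i \<in> {1..N-1} \<Longrightarrow> \<exists>c d. \<forall>x. u i x = c * x + d"
    and u_left: "\<And>i. i \<in> {1..N-1} \<Longrightarrow> u i (xs 1) = xs i"
    and u_right: "\<And>i. i \<in> {1..N-1} \<Longrightarrow> u i (xs N) = xs (i + 1)"
begin

lemma xs_less:
  assumes "1 \<le> i" "i < j" "j \<le> N"
  shows "xs i < xs j"
  using assms
proof (induction j)
  case (Suc j)
  show ?case
  proof (cases "i = j")
    case True
    then show ?thesis using Suc.prems xs_Suc_greater by simp
  next
    case False
    then have "xs i < xs j" using Suc by simp
    also have "xs j < xs (Suc j)" using xs_Suc_greater[of j] Suc.prems False by simp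
    finally show ?thesis .
  qed
qed simp

lemma xs_subinterval_less: "i \<in> {1..N-1} \<Longrightarrow> xs i < xs (i + 1)"
  using xs_Suc_greater[of i] N_ge_2 by auto

lemma xs_le: "1 \<le> i \<Longrightarrow> i \<le> j \<Longrightarrow> j \<le> N \<Longrightarrow> xs i \<le> xs j"
  using xs_less[of i j] by (cases "i = j") auto

lemma xs_1_less_xs_N: "xs 1 < xs N"
  using xs_less[of 1 N] N_ge_2 by simp

lemma subinterval_subset: "i \<in> {1..N-1} \<Longrightarrow> {xs i..xs (i + 1)} \<subseteq> {xs 1..xs N}"
  using xs_le[of 1 i] xs_le[of "i + 1" N] by auto

lemma subintervals_cover:
  assumes y: "y \<in> {xs 1..xs N}"
  obtains i where "i \<in> {1..N-1}" "y \<in> {xs i..xs (i + 1)}"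
proof -
  define S where "S = {i \<in> {1..N-1}. xs i \<le> y}"
  define i where "i = Max S"
  have S: "finite S" "1 \<in> S"
    using y N_ge_2 by (auto simp: S_def)
  then have "i \<in> S"
    unfolding i_def by (intro Max_in) auto
  then have i: "i \<in> {1..N-1}" "xs i \<le> y"
    by (auto simp: S_def)
  have "y \<le> xs (i + 1)"
  proof (cases "i = N - 1")
    case True
    then show ?thesis using y N_ge_2 by simp
  next
    case False
    then have "i + 1 \<in> {1..N-1}" using i by auto
    moreover have "i + 1 \<notin> S"
      using Max_ge[OF S(1), of "i + 1"] by (auto simp: i_def)
    ultimately show ?thesis by (auto simp: S_def)
  qed
  with i that show ?thesis by auto
qed

lemma subintervals_overlap:
  assumes "i \<in> {1..N-1}" "j \<in> {1..N-1}" "i < j"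
    and "y \<in> {xs i..xs (i + 1)}" "y \<in> {xs j..xs (j + 1)}"
  shows "y = xs (i + 1)" "y = xs j"
proof -
  have "xs (i + 1) \<le> xs j"
    using assms by (intro xs_le) auto
  then show "y = xs (i + 1)" "y = xs j"
    using assms by auto
qed

definition u_slope :: "nat \<Rightarrow> real" where
  "u_slope i = (xs (i + 1) - xs i) / (xs N - xs 1)"

lemma u_slope_pos: "i \<in> {1..N-1} \<Longrightarrow> 0 < u_slope i"
  using xs_subinterval_less[of i] xs_1_less_xs_N by (simp add: u_slope_def)

lemma u_slope_mult: "u_slope i * (xs N - xs 1) = xs (i + 1) - xs i"
  using xs_1_less_xs_N by (simp add: u_slope_def)

lemma u_eq:
  assumes i: "i \<in> {1..N-1}"
  shows "u i x = xs i + u_slope i * (x - xs 1)"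
proof -
  obtain c d where cd: "\<And>x. u i x = c * x + d"
    using u_affine[OF i] by blast
  have "c * (xs N - xs 1) = xs (i + 1) - xs i"
    using u_left[OF i] u_right[OF i] by (simp add: cd algebra_simps)
  then have "c * (xs N - xs 1) = u_slope i * (xs N - xs 1)"
    using u_slope_mult[of i] by simp
  then have "c = u_slope i"
    using xs_1_less_xs_N by simp
  moreover have "d = xs i - c * xs 1"
    using u_left[OF i] by (simp add: cd)
  ultimately show ?thesis
    by (simp add: cd algebra_simps)
qed

lemma continuous_on_u:
  assumes "i \<in> {1..N-1}"
  shows "continuous_on S (u i)"
proof -
  have "u i = (\<lambda>x. xs i + u_slope i * (x - xs 1))"
    using u_eq[OF assms] by auto
  then show ?thesis
    by (simp add: continuous_intros)
qed

definition u_inv :: "nat \<Rightarrow> real \<Rightarrow> real" where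
  "u_inv i y = xs 1 + (y - xs i) / u_slope i"

lemma u_inv_u: "i \<in> {1..N-1} \<Longrightarrow> u_inv i (u i x) = x"
  using u_slope_pos[of i] by (simp add: u_eq u_inv_def)

lemma u_u_inv: "i \<in> {1..N-1} \<Longrightarrow> u i (u_inv i y) = y"
  using u_slope_pos[of i] by (simp add: u_eq u_inv_def)

lemma u_inv_ends:
  assumes "i \<in> {1..N-1}"
  shows "u_inv i (xs i) = xs 1" "u_inv i (xs (i + 1)) = xs N"
proof -
  have "xs (i + 1) - xs i = u_slope i * (xs N - xs 1)"
    using u_slope_mult[of i] by simp
  then show "u_inv i (xs i) = xs 1" "u_inv i (xs (i + 1)) = xs N"
    using u_slope_pos[OF assms] by (simp_all add: u_inv_def)
qed

lemma continuous_on_u_inv: "i \<in> {1..N-1} \<Longrightarrow> continuous_on S (u_inv i)"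
  unfolding u_inv_def by (intro continuous_intros) (use u_slope_pos[of i] in auto)

lemma u_mem:
  assumes i: "i \<in> {1..N-1}" and x: "x \<in> {xs 1..xs N}"
  shows "u i x \<in> {xs i..xs (i + 1)}"
proof -
  have "u_slope i * (x - xs 1) \<le> u_slope i * (xs N - xs 1)" "0 \<le> u_slope i * (x - xs 1)"
    using x u_slope_pos[OF i] by (intro mult_left_mono mult_nonneg_nonneg; simp)+
  then show ?thesis
    using u_slope_mult[of i] unfolding u_eq[OF i] atLeastAtMost_iff by linarith
qed

lemma u_inv_mem:
  assumes i: "i \<in> {1..N-1}" and y: "y \<in> {xs i..xs (i + 1)}"
  shows "u_inv i y \<in> {xs 1..xs N}"
proof -
  have "(y - xs i) / u_slope i \<le> (xs N - xs 1)" "0 \<le> (y - xs i) / u_slope i"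
    using y u_slope_pos[OF i] u_slope_mult[of i] by (simp_all add: divide_le_eq mult.commute)
  then show ?thesis
    by (simp add: u_inv_def)
qed

lemma u_in_interval: "i \<in> {1..N-1} \<Longrightarrow> x \<in> {xs 1..xs N} \<Longrightarrow> u i x \<in> {xs 1..xs N}"
  using u_mem subinterval_subset by blast

lemma interval_eq_union_images:
  assumes "y \<in> {xs 1..xs N}"
  obtains i x where "i \<in> {1..N-1}" "x \<in> {xs 1..xs N}" "y = u i x"
proof -
  obtain i where "i \<in> {1..N-1}" "y \<in> {xs i..xs (i + 1)}"
    using subintervals_cover[OF assms] .
  then show ?thesis
    using that u_inv_mem u_u_inv by metis
qed

end

lemma uniform_limit_of_geometric_steps:
  fixes g :: "nat \<Rightarrow> 'a \<Rightarrow> real"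
  assumes steps: "\<And>m x. x \<in> S \<Longrightarrow> \<bar>g (Suc m) x - g m x\<bar> \<le> K * s ^ m"
    and s: "0 \<le> s" "s < 1"
  shows "uniform_limit S g (\<lambda>x. g 0 x + (\<Sum>j. g (Suc j) x - g j x)) sequentially"
proof -
  have "summable (\<lambda>m. K * s ^ m)"
    using s by (intro summable_mult summable_geometric) simp
  then have "uniform_limit S (\<lambda>m x. \<Sum>j<m. g (Suc j) x - g j x) (\<lambda>x. \<Sum>j. g (Suc j) x - g j x)
      sequentially"
    using steps by (intro Weierstrass_m_test) simp
  then have "uniform_limit S (\<lambda>m x. g 0 x + (\<Sum>j<m. g (Suc j) x - g j x))
      (\<lambda>x. g 0 x + (\<Sum>j. g (Suc j) x - g j x)) sequentially"
    by (intro uniform_limit_add uniform_limit_const)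
  moreover have "g 0 x + (\<Sum>j<m. g (Suc j) x - g j x) = g m x" for m x
    using sum_lessThan_telescope[of "\<lambda>j. g j x" m] by simp
  ultimately show ?thesis
    by simp
qed

lemma uniform_limit_of_controlled_dist:
  fixes G M :: "nat \<Rightarrow> 'a \<Rightarrow> real"
  assumes M: "uniform_limit S M f F" and c: "0 \<le> c"
    and control: "\<forall>\<^sub>F n in F. \<forall>\<eta>. (\<forall>x\<in>S. \<bar>f x - M n x\<bar> \<le> \<eta>) \<longrightarrow> (\<forall>x\<in>S. \<bar>G n x - f x\<bar> \<le> c * \<eta>)"
  shows "uniform_limit S G f F"
  unfolding uniform_limit_iff
proof (intro allI impI)
  fix e :: real assume e: "0 < e"
  have "\<forall>\<^sub>F n in F. \<forall>x\<in>S. dist (M n x) (f x) < e / (c + 1)"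
    using M e c unfolding uniform_limit_iff by simp
  with control show "\<forall>\<^sub>F n in F. \<forall>x\<in>S. dist (G n x) (f x) < e"
  proof eventually_elim
    case (elim n)
    then have "\<forall>x\<in>S. \<bar>f x - M n x\<bar> \<le> e / (c + 1)"
      by (auto simp: dist_real_def abs_minus_commute less_imp_le)
    with elim have "\<forall>x\<in>S. \<bar>G n x - f x\<bar> \<le> c * (e / (c + 1))"
      by blast
    moreover have "c * (e / (c + 1)) < e"
      using c e by (simp add: field_simps)
    ultimately show ?case
      by (auto simp: dist_real_def)
  qed
qed

lemma INF_le_continuous_on:
  fixes g :: "'a::topological_space \<Rightarrow> real"
  assumes "compact S" "continuous_on S g" "x \<in> S"
  shows "(INF y\<in>S. g y) \<le> g x"
  using assms by (intro cINF_lower bounded_imp_bdd_below compact_imp_bounded compact_continuous_image)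

lemma SUP_ge_continuous_on:
  fixes g :: "'a::topological_space \<Rightarrow> real"
  assumes "compact S" "continuous_on S g" "x \<in> S"
  shows "g x \<le> (SUP y\<in>S. g y)"
  using assms by (intro cSUP_upper bounded_imp_bdd_above compact_imp_bounded compact_continuous_image)

lemma abs_le_sup_norm_on:
  fixes g :: "real \<Rightarrow> real"
  assumes "compact S" "continuous_on S g" "x \<in> S"
  shows "\<bar>g x\<bar> \<le> sup_norm_on S g"
  unfolding sup_norm_on_def using assms by (intro SUP_ge_continuous_on continuous_intros)

text \<open>The arithmetic content of condition (2). When \<open>M = 0\<close> the bounds force \<open>a = 0\<close>, since
  division by zero yields zero.\<close>
lemma scaled_update_in_box:
  fixes y \<phi> \<Phi> w m M C a z :: real
  assumes y: "\<phi> \<le> y" "y \<le> \<Phi>" "0 \<le> \<phi>" "y \<le> C"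
    and w: "m \<le> w" "w \<le> M" "0 \<le> w" "m < C"
    and z: "0 \<le> z" "z \<le> C"
    and lower: "max (- \<phi> / (C - m)) (- ((C - \<Phi>) / M)) \<le> a"
    and upper: "a \<le> min (\<phi> / M) ((C - \<Phi>) / (C - m))"
  shows "0 \<le> y + a * (z - w) \<and> y + a * (z - w) \<le> C"
proof (cases "M = 0")
  case True
  then have "a = 0" using lower upper by simp
  then show ?thesis using y by simp
next
  case False
  then have M: "0 < M" using w by simp
  have Cm: "0 < C - m" using w by simp
  have bounds: "- \<phi> \<le> a * (C - m)" "a * (C - m) \<le> C - \<Phi>" "- (C - \<Phi>) \<le> a * M" "a * M \<le> \<phi>"
    using lower upper Cm M by (simp_all add: field_simps)
  have "- M \<le> z - w" "z - w \<le> C - m"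
    using w z by auto
  show ?thesis
  proof (cases "0 \<le> a")
    case True
    then have "a * (- M) \<le> a * (z - w)" "a * (z - w) \<le> a * (C - m)"
      using \<open>- M \<le> z - w\<close> \<open>z - w \<le> C - m\<close> by (metis mult_left_mono)+
    then show ?thesis using bounds y by auto
  next
    case False
    then have "a * (C - m) \<le> a * (z - w)" "a * (z - w) \<le> a * (- M)"
      using \<open>- M \<le> z - w\<close> \<open>z - w \<le> C - m\<close> False by (metis mult_left_mono_neg nle_le)+
    then show ?thesis using bounds y by auto
  qed
qed

definition alpha_fractal_fun ::
  "(nat \<Rightarrow> real) \<Rightarrow> nat \<Rightarrow> (nat \<Rightarrow> real \<Rightarrow> real) \<Rightarrow> (nat \<Rightarrow> real \<Rightarrow> real)
   \<Rightarrow> (real \<Rightarrow> real) \<Rightarrow> (real \<Rightarrow> real) \<Rightarrow> real \<Rightarrow> real" where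
  "alpha_fractal_fun xs N u \<alpha> b f =
     (THE g. continuous_on {xs 1..xs N} g \<and> (\<forall>x. x \<notin> {xs 1..xs N} \<longrightarrow> g x = 0) \<and>
        (\<forall>x\<in>{xs 1..xs N}. \<forall>i\<in>{1..N-1}. g (u i x) = f (u i x) + \<alpha> i x * (g x - b x)))"

lemma mkz_fractal_eq_alpha_fractal_fun:
  "mkz_fractal xs N u \<alpha> n q f = alpha_fractal_fun xs N u \<alpha> (mkz (xs 1) (xs N) n q f) f"
  by (simp add: mkz_fractal_def alpha_fractal_fun_def)

locale alpha_fractal = ifs_partition +
  fixes \<alpha> :: "nat \<Rightarrow> real \<Rightarrow> real" and b f :: "real \<Rightarrow> real" and s :: real
  assumes f_cont: "continuous_on {xs 1..xs N} f"
    and b_cont: "continuous_on {xs 1..xs N} b"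
    and b_left: "b (xs 1) = f (xs 1)" and b_right: "b (xs N) = f (xs N)"
    and \<alpha>_cont: "\<And>i. i \<in> {1..N-1} \<Longrightarrow> continuous_on {xs 1..xs N} (\<alpha> i)"
    and \<alpha>_bound: "\<And>i x. i \<in> {1..N-1} \<Longrightarrow> x \<in> {xs 1..xs N} \<Longrightarrow> \<bar>\<alpha> i x\<bar> \<le> s"
    and s_less_1: "s < 1"
begin

lemma s_nonneg: "0 \<le> s"
  using \<alpha>_bound[of 1 "xs 1"] N_ge_2 xs_1_less_xs_N by force

definition self_referential :: "(real \<Rightarrow> real) \<Rightarrow> bool" where
  "self_referential g \<longleftrightarrow>
     (\<forall>x\<in>{xs 1..xs N}. \<forall>i\<in>{1..N-1}. g (u i x) = f (u i x) + \<alpha> i x * (g x - b x))"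

definition agrees_at_ends :: "(real \<Rightarrow> real) \<Rightarrow> bool" where
  "agrees_at_ends g \<longleftrightarrow> g (xs 1) = f (xs 1) \<and> g (xs N) = f (xs N)"

definition RB_piece :: "(real \<Rightarrow> real) \<Rightarrow> nat \<Rightarrow> real \<Rightarrow> real" where
  "RB_piece g i y = f y + \<alpha> i (u_inv i y) * (g (u_inv i y) - b (u_inv i y))"

text \<open>Where two subintervals meet, both pieces equal \<open>f\<close> as
  soon as \<open>g\<close> agrees with \<open>f\<close> (and hence with \<open>b\<close>) at the end points of the interval, so the
  choice of the subinterval does not matter.\<close>
definition RB :: "(real \<Rightarrow> real) \<Rightarrow> real \<Rightarrow> real" where
  "RB g y = RB_piece g (SOME i. i \<in> {1..N-1} \<and> y \<in> {xs i..xs (i + 1)}) y"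

lemma RB_piece_at_ends:
  assumes "agrees_at_ends g" "i \<in> {1..N-1}"
  shows "RB_piece g i (xs i) = f (xs i)" "RB_piece g i (xs (i + 1)) = f (xs (i + 1))"
  using assms u_inv_ends[OF assms(2)] b_left b_right by (simp_all add: RB_piece_def agrees_at_ends_def)

lemma RB_eq_piece:
  assumes g: "agrees_at_ends g" and i: "i \<in> {1..N-1}" and y: "y \<in> {xs i..xs (i + 1)}"
  shows "RB g y = RB_piece g i y"
proof -
  define j where "j = (SOME i. i \<in> {1..N-1} \<and> y \<in> {xs i..xs (i + 1)})"
  have j: "j \<in> {1..N-1}" "y \<in> {xs j..xs (j + 1)}"
    using someI[of "\<lambda>i. i \<in> {1..N-1} \<and> y \<in> {xs i..xs (i + 1)}" i] i y by (auto simp: j_def)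
  have "RB_piece g j y = RB_piece g i y"
  proof (cases i j rule: linorder_cases)
    case less
    then show ?thesis
      using subintervals_overlap[OF i j(1) less y j(2)] RB_piece_at_ends[OF g] i j(1) by metis
  next
    case greater
    then show ?thesis
      using subintervals_overlap[OF j(1) i greater j(2) y] RB_piece_at_ends[OF g] i j(1) by metis
  qed simp
  then show ?thesis
    by (simp add: RB_def j_def)
qed

lemma RB_u:
  assumes "agrees_at_ends g" "i \<in> {1..N-1}" "x \<in> {xs 1..xs N}"
  shows "RB g (u i x) = f (u i x) + \<alpha> i x * (g x - b x)"
proof -
  have "RB g (u i x) = RB_piece g i (u i x)"
    by (rule RB_eq_piece[OF assms(1,2) u_mem[OF assms(2,3)]])
  then show ?thesis
    by (simp add: RB_piece_def u_inv_u[OF assms(2)])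
qed

lemma RB_agrees_at_ends:
  assumes g: "agrees_at_ends g"
  shows "agrees_at_ends (RB g)"
proof -
  have first: "1 \<in> {1..N-1}" and last: "N - 1 \<in> {1..N-1}" "N - 1 + 1 = N"
    using N_ge_2 by auto
  have "RB g (xs 1) = f (xs 1)"
    using RB_eq_piece[OF g first] RB_piece_at_ends[OF g first] xs_subinterval_less[OF first] by simp
  moreover have "RB g (xs N) = f (xs N)"
    using RB_eq_piece[OF g last(1)] RB_piece_at_ends[OF g last(1)] xs_subinterval_less[OF last(1)]
    unfolding last(2) by simp
  ultimately show ?thesis
    by (simp add: agrees_at_ends_def)
qed

lemma RB_continuous_on:
  assumes g: "agrees_at_ends g" "continuous_on {xs 1..xs N} g"
  shows "continuous_on {xs 1..xs N} (RB g)"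
proof -
  have "{xs 1..xs N} = (\<Union>i\<in>{1..N-1}. {xs i..xs (i + 1)})"
    using subintervals_cover subinterval_subset by blast
  moreover have "continuous_on (\<Union>i\<in>{1..N-1}. {xs i..xs (i + 1)}) (RB g)"
  proof (rule continuous_on_closed_Union)
    fix i assume i: "i \<in> {1..N-1}"
    have inv: "continuous_on {xs i..xs (i + 1)} (u_inv i)" "u_inv i ` {xs i..xs (i + 1)} \<subseteq> {xs 1..xs N}"
      using continuous_on_u_inv[OF i] u_inv_mem[OF i] by auto
    have "continuous_on {xs i..xs (i + 1)} (RB_piece g i)"
      unfolding RB_piece_def
      by (intro continuous_intros continuous_on_subset[OF f_cont subinterval_subset[OF i]]
          continuous_on_compose2[OF \<alpha>_cont[OF i] inv] continuous_on_compose2[OF g(2) inv]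
          continuous_on_compose2[OF b_cont inv])
    then show "continuous_on {xs i..xs (i + 1)} (RB g)"
      by (rule continuous_on_eq) (use RB_eq_piece[OF g(1) i] in auto)
  qed auto
  ultimately show ?thesis
    by simp
qed

lemma RB_dist_le:
  assumes g: "agrees_at_ends g" and h: "agrees_at_ends h"
    and dist: "\<And>x. x \<in> {xs 1..xs N} \<Longrightarrow> \<bar>g x - h x\<bar> \<le> \<eta>" and y: "y \<in> {xs 1..xs N}"
  shows "\<bar>RB g y - RB h y\<bar> \<le> s * \<eta>"
proof -
  obtain i x where i: "i \<in> {1..N-1}" and x: "x \<in> {xs 1..xs N}" and y: "y = u i x"
    using interval_eq_union_images[OF y] .
  have "\<bar>RB g y - RB h y\<bar> = \<bar>\<alpha> i x\<bar> * \<bar>g x - h x\<bar>"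
    unfolding y RB_u[OF g i x] RB_u[OF h i x] by (simp add: abs_mult[symmetric] algebra_simps)
  also have "\<dots> \<le> s * \<eta>"
    using \<alpha>_bound[OF i x] dist[OF x] s_nonneg by (intro mult_mono) auto
  finally show ?thesis .
qed

lemma self_referential_limit:
  assumes g: "\<And>m. agrees_at_ends (g m)" "\<And>m. g (Suc m) = RB (g m)"
    and lim: "\<And>x. x \<in> {xs 1..xs N} \<Longrightarrow> (\<lambda>m. g m x) \<longlonglongrightarrow> G x"
  shows "self_referential G"
  unfolding self_referential_def
proof (intro ballI)
  fix x i assume x: "x \<in> {xs 1..xs N}" and i: "i \<in> {1..N-1}"
  have "(\<lambda>m. g (Suc m) (u i x)) \<longlonglongrightarrow> G (u i x)"
    using LIMSEQ_Suc[OF lim[OF u_in_interval[OF i x]]] .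
  moreover have "(\<lambda>m. g (Suc m) (u i x)) \<longlonglongrightarrow> f (u i x) + \<alpha> i x * (G x - b x)"
    unfolding g(2) RB_u[OF g(1) i x] by (intro tendsto_intros lim[OF x])
  ultimately show "G (u i x) = f (u i x) + \<alpha> i x * (G x - b x)"
    by (rule LIMSEQ_unique)
qed

lemma RB_in_box:
  assumes invariant: "\<And>i x z. i \<in> {1..N-1} \<Longrightarrow> x \<in> {xs 1..xs N} \<Longrightarrow> lo \<le> z \<Longrightarrow> z \<le> hi \<Longrightarrow>
      lo \<le> f (u i x) + \<alpha> i x * (z - b x) \<and> f (u i x) + \<alpha> i x * (z - b x) \<le> hi"
    and g: "agrees_at_ends g" "\<And>x. x \<in> {xs 1..xs N} \<Longrightarrow> lo \<le> g x \<and> g x \<le> hi"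
    and y: "y \<in> {xs 1..xs N}"
  shows "lo \<le> RB g y \<and> RB g y \<le> hi"
proof -
  obtain i x where i: "i \<in> {1..N-1}" and x: "x \<in> {xs 1..xs N}" and y: "y = u i x"
    using interval_eq_union_images[OF y] .
  show ?thesis
    using invariant[OF i x] g(2)[OF x] by (simp add: y RB_u[OF g(1) i x])
qed

lemma RB_iterates_dist_le:
  assumes g: "\<And>m. agrees_at_ends (g m)" "\<And>m. g (Suc m) = RB (g m)"
    and K: "\<And>x. x \<in> {xs 1..xs N} \<Longrightarrow> \<bar>g 1 x - g 0 x\<bar> \<le> K"
    and x: "x \<in> {xs 1..xs N}"
  shows "\<bar>g (Suc m) x - g m x\<bar> \<le> K * s ^ m"
  using x
proof (induction m arbitrary: x)
  case (Suc m)
  have "\<bar>RB (g (Suc m)) x - RB (g m) x\<bar> \<le> s * (K * s ^ m)"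
    using Suc by (intro RB_dist_le g(1))
  then show ?case
    by (simp add: g(2) mult_ac)
qed (use K in simp)

lemma self_referential_exists_in_box:
  assumes f_box: "\<And>x. x \<in> {xs 1..xs N} \<Longrightarrow> lo \<le> f x \<and> f x \<le> hi"
    and invariant: "\<And>i x z. i \<in> {1..N-1} \<Longrightarrow> x \<in> {xs 1..xs N} \<Longrightarrow> lo \<le> z \<Longrightarrow> z \<le> hi \<Longrightarrow>
      lo \<le> f (u i x) + \<alpha> i x * (z - b x) \<and> f (u i x) + \<alpha> i x * (z - b x) \<le> hi"
  obtains g where "continuous_on {xs 1..xs N} g" "self_referential g"
    "\<And>x. x \<in> {xs 1..xs N} \<Longrightarrow> lo \<le> g x \<and> g x \<le> hi"
proof -
  define iter where "iter m = (RB ^^ m) f" for m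
  have iter_Suc: "iter (Suc m) = RB (iter m)" for m
    by (simp add: iter_def)
  have iter: "continuous_on {xs 1..xs N} (iter m) \<and> agrees_at_ends (iter m) \<and>
      (\<forall>x\<in>{xs 1..xs N}. lo \<le> iter m x \<and> iter m x \<le> hi)" for m
  proof (induction m)
    case 0
    then show ?case
      using f_cont f_box by (simp add: iter_def agrees_at_ends_def)
  next
    case (Suc m)
    then show ?case
      using RB_continuous_on RB_agrees_at_ends RB_in_box[OF invariant] by (simp add: iter_Suc)
  qed
  have "\<bar>iter 1 x - iter 0 x\<bar> \<le> hi - lo" if "x \<in> {xs 1..xs N}" for x
  proof -
    have "lo \<le> iter 0 x \<and> iter 0 x \<le> hi" "lo \<le> iter 1 x \<and> iter 1 x \<le> hi"
      using iter[of 0] iter[of 1] that by blast+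
    then show ?thesis
      by (auto simp: abs_le_iff)
  qed
  then have "\<bar>iter (Suc m) x - iter m x\<bar> \<le> (hi - lo) * s ^ m" if "x \<in> {xs 1..xs N}" for m x
    using iter iter_Suc that by (intro RB_iterates_dist_le) auto
  then obtain G where lim: "uniform_limit {xs 1..xs N} iter G sequentially"
    using uniform_limit_of_geometric_steps s_nonneg s_less_1 by blast
  have pointwise: "(\<lambda>m. iter m x) \<longlonglongrightarrow> G x" if "x \<in> {xs 1..xs N}" for x
    using tendsto_uniform_limitI[OF lim that] .
  show ?thesis
  proof
    show "continuous_on {xs 1..xs N} G"
      by (rule uniform_limit_theorem[OF _ lim]) (use iter in auto)
    show "self_referential G"
      by (rule self_referential_limit[OF _ iter_Suc pointwise]) (use iter in auto)
    show "lo \<le> G x \<and> G x \<le> hi" if "x \<in> {xs 1..xs N}" for x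
      using iter that by (intro conjI LIMSEQ_le_const[OF pointwise] LIMSEQ_le_const2[OF pointwise]) auto
  qed
qed

lemma self_referential_exists:
  obtains g where "continuous_on {xs 1..xs N} g" "self_referential g"
proof -
  obtain Bf Bb where Bf: "\<And>x. x \<in> {xs 1..xs N} \<Longrightarrow> \<bar>f x\<bar> \<le> Bf"
    and Bb: "\<And>x. x \<in> {xs 1..xs N} \<Longrightarrow> \<bar>b x\<bar> \<le> Bb"
    using continuous_on_compact_bound[OF compact_Icc f_cont] continuous_on_compact_bound[OF compact_Icc b_cont]
    by (metis real_norm_def)
  define K where "K = (Bf + s * Bb) / (1 - s)"
  have K: "Bf + s * (K + Bb) = K" "Bf \<le> K"
    using s_less_1 s_nonneg Bf[of "xs 1"] Bb[of "xs 1"] xs_1_less_xs_N by (auto simp: K_def field_simps)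
  have "- K \<le> f (u i x) + \<alpha> i x * (z - b x) \<and> f (u i x) + \<alpha> i x * (z - b x) \<le> K"
    if i: "i \<in> {1..N-1}" and x: "x \<in> {xs 1..xs N}" and z: "- K \<le> z" "z \<le> K" for i x z
  proof -
    have "\<bar>\<alpha> i x * (z - b x)\<bar> \<le> s * (K + Bb)"
      unfolding abs_mult using \<alpha>_bound[OF i x] Bb[OF x] z s_nonneg by (intro mult_mono) auto
    then show ?thesis
      using Bf[OF u_in_interval[OF i x]] K(1) by (simp add: abs_le_iff)
  qed
  moreover have "- K \<le> f x \<and> f x \<le> K" if "x \<in> {xs 1..xs N}" for x
    using Bf[OF that] K(2) by (simp add: abs_le_iff)
  ultimately show ?thesis
    using self_referential_exists_in_box that by metis
qed

lemma self_similar_bound: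
  assumes h: "continuous_on {xs 1..xs N} h"
    and step: "\<And>i x. i \<in> {1..N-1} \<Longrightarrow> x \<in> {xs 1..xs N} \<Longrightarrow> h (u i x) \<le> s * h x + c"
    and y: "y \<in> {xs 1..xs N}"
  shows "h y \<le> c / (1 - s)"
proof -
  obtain z where z: "z \<in> {xs 1..xs N}" and z_max: "\<And>y. y \<in> {xs 1..xs N} \<Longrightarrow> h y \<le> h z"
    using continuous_attains_sup[OF compact_Icc _ h] xs_1_less_xs_N by auto
  obtain i x where i: "i \<in> {1..N-1}" and x: "x \<in> {xs 1..xs N}" and zx: "z = u i x"
    using interval_eq_union_images[OF z] .
  have "h z \<le> s * h z + c"
    using step[OF i x] z_max[OF x] s_nonneg zx by (smt (verit) mult_left_mono)
  then have "h z \<le> c / (1 - s)"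
    using s_less_1 by (simp add: field_simps)
  then show ?thesis
    using z_max[OF y] by linarith
qed

lemma self_referential_unique:
  assumes "continuous_on {xs 1..xs N} g1" "self_referential g1"
    and "continuous_on {xs 1..xs N} g2" "self_referential g2"
    and x: "x \<in> {xs 1..xs N}"
  shows "g1 x = g2 x"
proof -
  have "\<bar>g1 x - g2 x\<bar> \<le> 0 / (1 - s)"
  proof (rule self_similar_bound[OF _ _ x])
    show "continuous_on {xs 1..xs N} (\<lambda>y. \<bar>g1 y - g2 y\<bar>)"
      using assms by (intro continuous_intros)
    fix i y assume i: "i \<in> {1..N-1}" and y: "y \<in> {xs 1..xs N}"
    have "g1 (u i y) = f (u i y) + \<alpha> i y * (g1 y - b y)" "g2 (u i y) = f (u i y) + \<alpha> i y * (g2 y - b y)"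
      using assms(2,4) i y by (auto simp: self_referential_def)
    then have "\<bar>g1 (u i y) - g2 (u i y)\<bar> = \<bar>\<alpha> i y * (g1 y - g2 y)\<bar>"
      by (simp add: algebra_simps)
    also have "\<dots> = \<bar>\<alpha> i y\<bar> * \<bar>g1 y - g2 y\<bar>"
      by (rule abs_mult)
    also have "\<dots> \<le> s * \<bar>g1 y - g2 y\<bar> + 0"
      using \<alpha>_bound[OF i y] by (simp add: mult_right_mono)
    finally show "\<bar>g1 (u i y) - g2 (u i y)\<bar> \<le> s * \<bar>g1 y - g2 y\<bar> + 0" .
  qed
  then show ?thesis
    by simp
qed

lemma self_referential_dist_le:
  assumes g: "continuous_on {xs 1..xs N} g" "self_referential g"
    and \<eta>: "\<And>x. x \<in> {xs 1..xs N} \<Longrightarrow> \<bar>f x - b x\<bar> \<le> \<eta>"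
    and x: "x \<in> {xs 1..xs N}"
  shows "\<bar>g x - f x\<bar> \<le> s * \<eta> / (1 - s)"
proof (rule self_similar_bound[OF _ _ x])
  show "continuous_on {xs 1..xs N} (\<lambda>y. \<bar>g y - f y\<bar>)"
    using g f_cont by (intro continuous_intros)
  fix i y assume i: "i \<in> {1..N-1}" and y: "y \<in> {xs 1..xs N}"
  have "g (u i y) = f (u i y) + \<alpha> i y * (g y - b y)"
    using g(2) i y by (auto simp: self_referential_def)
  then have "\<bar>g (u i y) - f (u i y)\<bar> = \<bar>\<alpha> i y\<bar> * \<bar>(g y - f y) + (f y - b y)\<bar>"
    by (simp add: abs_mult)
  also have "\<dots> \<le> s * (\<bar>g y - f y\<bar> + \<eta>)"
    using \<alpha>_bound[OF i y] \<eta>[OF y] s_nonneg abs_triangle_ineq[of "g y - f y" "f y - b y"]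
    by (intro mult_mono) auto
  finally show "\<bar>g (u i y) - f (u i y)\<bar> \<le> s * \<bar>g y - f y\<bar> + s * \<eta>"
    by (simp add: algebra_simps)
qed

abbreviation fractal :: "real \<Rightarrow> real" where
  "fractal \<equiv> alpha_fractal_fun xs N u \<alpha> b f"

lemma fractal_eq:
  assumes g: "continuous_on {xs 1..xs N} g" "self_referential g" and x: "x \<in> {xs 1..xs N}"
  shows "fractal x = g x"
proof -
  define g' where "g' y = (if y \<in> {xs 1..xs N} then g y else 0)" for y
  let ?P = "\<lambda>g. continuous_on {xs 1..xs N} g \<and> (\<forall>x. x \<notin> {xs 1..xs N} \<longrightarrow> g x = 0) \<and> self_referential g"
  have "self_referential g'"
    using g(2) u_in_interval by (simp add: self_referential_def g'_def)
  moreover have "continuous_on {xs 1..xs N} g'"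
    using g(1) by (rule continuous_on_eq) (simp add: g'_def)
  ultimately have "?P g'"
    by (simp add: g'_def)
  moreover have "h = g'" if "?P h" for h
  proof
    fix y
    show "h y = g' y"
      using that self_referential_unique[of h g' y] \<open>?P g'\<close> by (cases "y \<in> {xs 1..xs N}") (auto simp: g'_def)
  qed
  ultimately have "(THE g. ?P g) = g'"
    by (rule the_equality)
  then show ?thesis
    using x by (simp add: alpha_fractal_fun_def self_referential_def g'_def)
qed

lemma fractal_dist_le:
  assumes "\<And>x. x \<in> {xs 1..xs N} \<Longrightarrow> \<bar>f x - b x\<bar> \<le> \<eta>" and "x \<in> {xs 1..xs N}"
  shows "\<bar>fractal x - f x\<bar> \<le> s * \<eta> / (1 - s)"
proof -
  obtain g where "continuous_on {xs 1..xs N} g" "self_referential g"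
    using self_referential_exists .
  then show ?thesis
    using assms fractal_eq self_referential_dist_le by metis
qed

lemma fractal_in_box:
  assumes "\<And>x. x \<in> {xs 1..xs N} \<Longrightarrow> lo \<le> f x \<and> f x \<le> hi"
    and "\<And>i x z. i \<in> {1..N-1} \<Longrightarrow> x \<in> {xs 1..xs N} \<Longrightarrow> lo \<le> z \<Longrightarrow> z \<le> hi \<Longrightarrow>
      lo \<le> f (u i x) + \<alpha> i x * (z - b x) \<and> f (u i x) + \<alpha> i x * (z - b x) \<le> hi"
    and "x \<in> {xs 1..xs N}"
  shows "lo \<le> fractal x \<and> fractal x \<le> hi"
proof -
  obtain g where "continuous_on {xs 1..xs N} g" "self_referential g"
    "\<And>x. x \<in> {xs 1..xs N} \<Longrightarrow> lo \<le> g x \<and> g x \<le> hi"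
    using self_referential_exists_in_box[OF assms(1,2)] by blast
  then show ?thesis
    using assms(3) fractal_eq by metis
qed

lemma continuous_on_f_u:
  assumes "i \<in> {1..N-1}"
  shows "continuous_on {xs 1..xs N} (\<lambda>y. f (u i y))"
  by (rule continuous_on_compose2[OF f_cont continuous_on_u[OF assms]]) (use u_in_interval[OF assms] in blast)

lemma fractal_nonneg:
  fixes C :: real
  defines "\<phi> \<equiv> \<lambda>i. INF y\<in>{xs 1..xs N}. f (u i y)" and "\<Phi> \<equiv> \<lambda>i. SUP y\<in>{xs 1..xs N}. f (u i y)"
    and "m \<equiv> INF y\<in>{xs 1..xs N}. b y" and "M \<equiv> SUP y\<in>{xs 1..xs N}. b y"
  assumes f_nonneg: "\<And>x. x \<in> {xs 1..xs N} \<Longrightarrow> 0 \<le> f x"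
    and b_nonneg: "\<And>x. x \<in> {xs 1..xs N} \<Longrightarrow> 0 \<le> b x"
    and C: "max m (sup_norm_on {xs 1..xs N} f) < C"
    and lower: "\<And>i x. i \<in> {1..N-1} \<Longrightarrow> x \<in> {xs 1..xs N} \<Longrightarrow>
      max (- \<phi> i / (C - m)) (- ((C - \<Phi> i) / M)) \<le> \<alpha> i x"
    and upper: "\<And>i x. i \<in> {1..N-1} \<Longrightarrow> x \<in> {xs 1..xs N} \<Longrightarrow>
      \<alpha> i x \<le> min (\<phi> i / M) ((C - \<Phi> i) / (C - m))"
    and x: "x \<in> {xs 1..xs N}"
  shows "0 \<le> fractal x"
proof -
  have f_le_C: "f y \<le> C" if "y \<in> {xs 1..xs N}" for y
  proof -
    have "f y \<le> sup_norm_on {xs 1..xs N} f"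
      using abs_le_sup_norm_on[OF compact_Icc f_cont that] by simp
    then show ?thesis
      using C by simp
  qed
  have "0 \<le> f (u i y) + \<alpha> i y * (z - b y) \<and> f (u i y) + \<alpha> i y * (z - b y) \<le> C"
    if i: "i \<in> {1..N-1}" and y: "y \<in> {xs 1..xs N}" and z: "0 \<le> z" "z \<le> C" for i y z
  proof (rule scaled_update_in_box[OF _ _ _ _ _ _ _ _ z lower[OF i y] upper[OF i y]])
    show "\<phi> i \<le> f (u i y)" "f (u i y) \<le> \<Phi> i"
      unfolding \<phi>_def \<Phi>_def using continuous_on_f_u[OF i] y
      by (auto intro: INF_le_continuous_on SUP_ge_continuous_on)
    show "0 \<le> \<phi> i"
      unfolding \<phi>_def using xs_1_less_xs_N f_nonneg u_in_interval[OF i]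
      by (intro cINF_greatest) auto
    show "m \<le> b y" "b y \<le> M"
      unfolding m_def M_def using b_cont y by (auto intro: INF_le_continuous_on SUP_ge_continuous_on)
    show "f (u i y) \<le> C" "0 \<le> b y" "m < C"
      using f_le_C u_in_interval[OF i y] b_nonneg[OF y] C by auto
  qed
  then show ?thesis
    using fractal_in_box[of 0 C, OF _ _ x] f_nonneg f_le_C by blast
qed

end

lemma uniform_limit_alpha_fractal_fun:
  assumes fractal: "\<And>n. 1 \<le> n \<Longrightarrow> alpha_fractal xs N u \<alpha> (b n) f s"
    and lim: "uniform_limit {xs 1..xs N} b f sequentially"
  shows "uniform_limit {xs 1..xs N} (\<lambda>n. alpha_fractal_fun xs N u \<alpha> (b n) f) f sequentially"
proof (rule uniform_limit_of_controlled_dist[OF lim])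
  show "0 \<le> s / (1 - s)"
    using alpha_fractal.s_nonneg[OF fractal[of 1]] alpha_fractal.s_less_1[OF fractal[of 1]] by simp
  show "\<forall>\<^sub>F n in sequentially. \<forall>\<eta>. (\<forall>x\<in>{xs 1..xs N}. \<bar>f x - b n x\<bar> \<le> \<eta>) \<longrightarrow>
      (\<forall>x\<in>{xs 1..xs N}. \<bar>alpha_fractal_fun xs N u \<alpha> (b n) f x - f x\<bar> \<le> s / (1 - s) * \<eta>)"
    using alpha_fractal.fractal_dist_le[OF fractal] by (intro eventually_sequentiallyI[of 1]) simp
qed

theorem theorem4p1:
  fixes xs :: "nat \<Rightarrow> real" and N :: nat and a b :: "nat \<Rightarrow> real"
    and f :: "real \<Rightarrow> real" and q C :: "nat \<Rightarrow> real" and \<alpha> :: "nat \<Rightarrow> real \<Rightarrow> real"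
  defines "I \<equiv> {xs 1..xs N}"
  defines "u \<equiv> (\<lambda>i x. a i * x + b i)"
  defines "M \<equiv> (\<lambda>n. mkz (xs 1) (xs N) n (q n) f)"
  defines "\<phi> \<equiv> (\<lambda>i. INF x\<in>I. f (u i x))"
  defines "\<Phi> \<equiv> (\<lambda>i. SUP x\<in>I. f (u i x))"
  defines "\<phi>n \<equiv> (\<lambda>n. INF x\<in>I. M n x)"
  defines "\<Phi>n \<equiv> (\<lambda>n. SUP x\<in>I. M n x)"
  assumes N2: "N \<ge> 2"
    and part: "\<And>i. 1 \<le> i \<Longrightarrow> i < N \<Longrightarrow> xs i < xs (i + 1)"
    and u_left: "\<And>i. i \<in> {1..N-1} \<Longrightarrow> u i (xs 1) = xs i"
    and u_right: "\<And>i. i \<in> {1..N-1} \<Longrightarrow> u i (xs N) = xs (i + 1)"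
    and f_cont: "continuous_on I f"
    and f_nonneg: "\<And>x. x \<in> I \<Longrightarrow> f x \<ge> 0"
    and q_range: "\<And>n. n \<ge> 1 \<Longrightarrow> 0 < q n \<and> q n \<le> 1"
    and q_lim: "q \<longlonglongrightarrow> 1"
    and C_pos: "\<And>n. n \<ge> 1 \<Longrightarrow> C n > 0"
    and C_big: "\<And>n. n \<ge> 1 \<Longrightarrow> C n > max (\<phi>n n) (sup_norm_on I f)"
    and \<alpha>_cont: "\<And>i. i \<in> {1..N-1} \<Longrightarrow> continuous_on I (\<alpha> i)"
    and \<alpha>_norm: "Max ((\<lambda>i. sup_norm_on I (\<alpha> i)) ` {1..N-1}) < 1"
    and \<alpha>_lower: "\<And>n i x. n \<ge> 1 \<Longrightarrow> i \<in> {1..N-1} \<Longrightarrow> x \<in> I \<Longrightarrow>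
        max (- \<phi> i / (C n - \<phi>n n)) (- ((C n - \<Phi> i) / \<Phi>n n)) \<le> \<alpha> i x"
    and \<alpha>_upper: "\<And>n i x. n \<ge> 1 \<Longrightarrow> i \<in> {1..N-1} \<Longrightarrow> x \<in> I \<Longrightarrow>
        \<alpha> i x \<le> min (\<phi> i / \<Phi>n n) ((C n - \<Phi> i) / (C n - \<phi>n n))"
  shows "(\<forall>n\<ge>1. \<forall>x\<in>I. mkz_fractal xs N u \<alpha> n (q n) f x \<ge> 0) \<and>
         uniform_limit I (\<lambda>n. mkz_fractal xs N u \<alpha> n (q n) f) f sequentially"
proof -
  interpret ifs_partition xs N u
    by unfold_locales (use N2 part u_left u_right in \<open>auto simp: u_def\<close>)
  define A where "A = Max ((\<lambda>i. sup_norm_on I (\<alpha> i)) ` {1..N-1})"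
  have "\<bar>\<alpha> i x\<bar> \<le> A" if "i \<in> {1..N-1}" "x \<in> I" for i x
    using abs_le_sup_norm_on[OF compact_Icc \<alpha>_cont[OF that(1), unfolded I_def]] that
    unfolding A_def I_def by (fastforce intro: order_trans[OF _ Max_ge])
  then have fractal: "alpha_fractal xs N u \<alpha> (M n) f A" if "1 \<le> n" for n
    using that q_range[OF that] xs_1_less_xs_N f_cont \<alpha>_cont \<alpha>_norm
    by unfold_locales (auto simp: M_def I_def A_def mkz_continuous_on mkz_left_end mkz_right_end)
  have M_nonneg: "0 \<le> M n x" if "1 \<le> n" "x \<in> I" for n x
    using mkz_nonneg[OF xs_1_less_xs_N] f_cont f_nonneg q_range[OF that(1)] that by (simp add: M_def I_def)
  note defs = I_def \<phi>_def \<Phi>_def \<phi>n_def \<Phi>n_def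
  have "0 \<le> mkz_fractal xs N u \<alpha> n (q n) f x" if n: "1 \<le> n" and x: "x \<in> I" for n x
    using alpha_fractal.fractal_nonneg[OF fractal[OF n] f_nonneg[unfolded I_def] M_nonneg[OF n, unfolded I_def]
        C_big[OF n, unfolded defs] \<alpha>_lower[OF n, unfolded defs] \<alpha>_upper[OF n, unfolded defs] x[unfolded I_def]]
    by (simp add: mkz_fractal_eq_alpha_fractal_fun M_def)
  moreover have "uniform_limit I (\<lambda>n. mkz_fractal xs N u \<alpha> n (q n) f) f sequentially"
  proof -
    have "uniform_limit {xs 1..xs N} M f sequentially"
      using mkz_uniform_limit[OF xs_1_less_xs_N _ q_range q_lim] f_cont by (simp add: M_def I_def)
    from uniform_limit_alpha_fractal_fun[OF fractal this] show ?thesis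
      by (simp add: mkz_fractal_eq_alpha_fractal_fun M_def I_def)
  qed
  ultimately show ?thesis
    by blast
qed

end
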